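(* The Oracle Mechanism is almost budget feasible: there is a function $\varepsilon(\theta)\ge0$ depending only on $\theta$, with $\varepsilon(\theta)\to0$ as $\theta\to0$, such that on every instance with largeness ratio $\theta$ the total payment $\sum_{j=1}^k2r_{x_j}\partial_j$ is at most $(1+\varepsilon(\theta))B$.
   Context: Sellers $S=\{1,\dots,n\}$ each own one indivisible item and have a cost $c_i\ge0$. The buyer's utility is a monotone submodular $F:2^S\to\mathbb R_{\ge0}$, budget $B>0$; $c(T)=\sum_{i\in T}c_i$. $F^\star=\max\{F(T):c(T)\le B\}>0$; the largeness ratio is $\theta=\max_sF(\{s\})/F^\star$. Greedy sequence $\chi(F)=\langle x_1,\dots,x_n\rangle$: with $\chi_0=\emptyset$, $\chi_i=\{x_1,\dots,x_i\}$, $x_i$ maximizes $(F(\chi_{i-1}\cup\{s\})-F(\chi_{i-1}))/c_s$ over $s\notin\chi_{i-1}$ (ratio $+\infty$ if $c_s=0$; ties arbitrary); $\partial_i=F(\chi_i)-F(\chi_{i-1})$. Oracle Mechanism: compute $F^\star$, construct $\chi(F)$, let $k$ be the largest integer with $F(\chi_k)\le F^\star/2$, declare $\chi_k$ the winners, and pay each winner $x_j$ the amount $2r_{x_j}\partial_j$, where $r_s=B/F^\star_s$ and $F^\star_s=\max\{F(T):T\subseteq S\setminus\{s\},c(T)\le B\}$. *)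

theory Defs
  imports Complex_Main "HOL-Library.Extended_Real"
begin

text \<open>Sellers are S = {1..n}; costs c :: nat => real; utility F :: nat set => real.\<close>

definition cost :: "(nat \<Rightarrow> real) \<Rightarrow> nat set \<Rightarrow> real" where
  "cost c T = (\<Sum>i\<in>T. c i)"

definition monotone_submodular :: "nat set \<Rightarrow> (nat set \<Rightarrow> real) \<Rightarrow> bool" where
  "monotone_submodular S F \<longleftrightarrow>
     (\<forall>T. T \<subseteq> S \<longrightarrow> F T \<ge> 0) \<and>
     (\<forall>A B. A \<subseteq> B \<and> B \<subseteq> S \<longrightarrow> F A \<le> F B) \<and>
     (\<forall>A B. A \<subseteq> S \<and> B \<subseteq> S \<longrightarrow> F (A \<union> B) + F (A \<inter> B) \<le> F A + F B)"

definition opt :: "nat set \<Rightarrow> (nat \<Rightarrow> real) \<Rightarrow> real \<Rightarrow> (nat set \<Rightarrow> real) \<Rightarrow> real" where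
  "opt U c B F = Max {F T | T. T \<subseteq> U \<and> cost c T \<le> B}"

definition largeness :: "nat set \<Rightarrow> (nat \<Rightarrow> real) \<Rightarrow> real \<Rightarrow> (nat set \<Rightarrow> real) \<Rightarrow> real" where
  "largeness S c B F = Max ((\<lambda>s. F {s}) ` S) / opt S c B F"

definition chi :: "(nat \<Rightarrow> nat) \<Rightarrow> nat \<Rightarrow> nat set" where
  "chi x i = x ` {1..i}"

definition gain_ratio :: "(nat \<Rightarrow> real) \<Rightarrow> (nat set \<Rightarrow> real) \<Rightarrow> nat set \<Rightarrow> nat \<Rightarrow> ereal" where
  "gain_ratio c F T s = (if c s = 0 then \<infinity> else ereal ((F (T \<union> {s}) - F T) / c s))"

definition greedy_seq :: "nat \<Rightarrow> (nat \<Rightarrow> real) \<Rightarrow> (nat set \<Rightarrow> real) \<Rightarrow> (nat \<Rightarrow> nat) \<Rightarrow> bool" where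
  "greedy_seq n c F x \<longleftrightarrow>
     (\<forall>i\<in>{1..n}. x i \<in> {1..n} - chi x (i - 1) \<and>
        (\<forall>s \<in> {1..n} - chi x (i - 1).
            gain_ratio c F (chi x (i - 1)) s \<le> gain_ratio c F (chi x (i - 1)) (x i)))"

definition marginal :: "(nat set \<Rightarrow> real) \<Rightarrow> (nat \<Rightarrow> nat) \<Rightarrow> nat \<Rightarrow> real" where
  "marginal F x i = F (chi x i) - F (chi x (i - 1))"

definition rate :: "nat set \<Rightarrow> (nat \<Rightarrow> real) \<Rightarrow> real \<Rightarrow> (nat set \<Rightarrow> real) \<Rightarrow> nat \<Rightarrow> real" where
  "rate S c B F s = B / opt (S - {s}) c B F"

definition oracle_k :: "nat \<Rightarrow> (nat \<Rightarrow> real) \<Rightarrow> real \<Rightarrow> (nat set \<Rightarrow> real) \<Rightarrow> (nat \<Rightarrow> nat) \<Rightarrow> nat \<Rightarrow> bool" where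
  "oracle_k n c B F x k \<longleftrightarrow>
     k \<le> n \<and> F (chi x k) \<le> opt {1..n} c B F / 2 \<and>
     (\<forall>j. j \<le> n \<and> F (chi x j) \<le> opt {1..n} c B F / 2 \<longrightarrow> j \<le> k)"

definition oracle_payment :: "nat \<Rightarrow> (nat \<Rightarrow> real) \<Rightarrow> real \<Rightarrow> (nat set \<Rightarrow> real) \<Rightarrow> (nat \<Rightarrow> nat) \<Rightarrow> nat \<Rightarrow> real" where
  "oracle_payment n c B F x k = (\<Sum>j=1..k. 2 * rate {1..n} c B F (x j) * marginal F x j)"

end

theory Submission
  imports Defs
begin

text \<open>Every winner s satisfies F{s} \<le> F(chi_k) \<le> F*/2 and F{s} \<le> \<theta> F*. By submodularity, deleting s
  from an optimal budget-feasible set loses at most F{s}, so F*_s \<ge> max (1/2) (1 - \<theta>) F* and every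
  rate is at most B / (max (1/2) (1 - \<theta>) F*). The marginals of the winners telescope to
  F(chi_k) \<le> F*/2, so the total payment is at most B / max (1/2) (1 - \<theta>).\<close>

lemma finite_opt_candidates:
  assumes "finite U"
  shows "finite {F T | T. T \<subseteq> U \<and> cost c T \<le> B}"
proof -
  have "{F T | T. T \<subseteq> U \<and> cost c T \<le> B} \<subseteq> F ` Pow U" by auto
  then show ?thesis using assms finite_subset by blast
qed

lemma opt_ge:
  assumes "finite U" "T \<subseteq> U" "cost c T \<le> B"
  shows "F T \<le> opt U c B F"
  unfolding opt_def using assms by (intro Max_ge finite_opt_candidates) auto

lemma opt_attained:
  assumes "finite U" "B \<ge> 0"
  obtains T where "T \<subseteq> U" "cost c T \<le> B" "F T = opt U c B F"
proof -
  have "{F T | T. T \<subseteq> U \<and> cost c T \<le> B} \<noteq> {}"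
    using assms(2) by (auto simp: cost_def)
  then have "opt U c B F \<in> {F T | T. T \<subseteq> U \<and> cost c T \<le> B}"
    unfolding opt_def using assms(1) by (intro Max_in finite_opt_candidates)
  then show ?thesis using that by auto
qed

lemma cost_mono:
  assumes "finite U" "A \<subseteq> T" "T \<subseteq> U" "\<forall>i\<in>U. c i \<ge> 0"
  shows "cost c A \<le> cost c T"
  unfolding cost_def using assms by (intro sum_mono2) (auto intro: finite_subset)

lemma opt_delete_ge:
  assumes "finite U" "s \<in> U" "\<forall>i\<in>U. c i \<ge> 0" "B \<ge> 0" "monotone_submodular U F"
  shows "opt U c B F - F {s} \<le> opt (U - {s}) c B F"
proof -
  obtain T where T: "T \<subseteq> U" "cost c T \<le> B" "F T = opt U c B F"
    using opt_attained assms(1,4) by blast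
  from assms(5) have nonneg: "\<And>T. T \<subseteq> U \<Longrightarrow> F T \<ge> 0"
    and mono: "\<And>A T. A \<subseteq> T \<Longrightarrow> T \<subseteq> U \<Longrightarrow> F A \<le> F T"
    and submod: "\<And>A T. A \<subseteq> U \<Longrightarrow> T \<subseteq> U \<Longrightarrow> F (A \<union> T) + F (A \<inter> T) \<le> F A + F T"
    unfolding monotone_submodular_def by blast+
  have "F T \<le> F ((T - {s}) \<union> {s})"
    using assms(2) T(1) by (intro mono) auto
  also have "\<dots> \<le> F (T - {s}) + F {s} - F ((T - {s}) \<inter> {s})"
  proof -
    have "T - {s} \<subseteq> U" "{s} \<subseteq> U" using assms(2) T(1) by auto
    from submod[OF this] show ?thesis by linarith
  qed
  also have "\<dots> \<le> F (T - {s}) + F {s}"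
    using nonneg[of "{}"] by simp
  also have "\<dots> \<le> opt (U - {s}) c B F + F {s}"
  proof -
    have "cost c (T - {s}) \<le> cost c T"
      using assms(1,3) T(1) by (intro cost_mono) auto
    then have "F (T - {s}) \<le> opt (U - {s}) c B F"
      using assms(1) T(1,2) by (intro opt_ge) auto
    then show ?thesis by simp
  qed
  finally show ?thesis using T(3) by simp
qed

lemma singleton_le_largeness:
  assumes "finite S" "s \<in> S" "opt S c B F > 0"
  shows "F {s} \<le> largeness S c B F * opt S c B F"
  using assms Max_ge[of "(\<lambda>s. F {s}) ` S" "F {s}"] by (simp add: largeness_def)

text \<open>The absolute value keeps \<epsilon> nonnegative on all of the reals; on instances \<theta> \<ge> 0 anyway.\<close>
definition payment_overhead :: "real \<Rightarrow> real" where
  "payment_overhead \<theta> = 1 / max (1/2) (1 - \<bar>\<theta>\<bar>) - 1"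

lemma payment_overhead_nonneg: "payment_overhead \<theta> \<ge> 0"
  by (simp add: payment_overhead_def field_simps)

lemma payment_overhead_tendsto_0: "(payment_overhead \<longlongrightarrow> 0) (at_right 0)"
proof -
  have "(payment_overhead \<longlongrightarrow> payment_overhead 0) (at 0)"
    unfolding payment_overhead_def by (intro tendsto_intros) auto
  then show ?thesis
    by (simp add: payment_overhead_def filterlim_at_split[of payment_overhead])
qed

text \<open>The hypothesis F{s} \<le> F*/2 is what allows the factor 1/2 in place of 1 - \<theta> for large \<theta>.\<close>
lemma rate_le_overhead:
  assumes "finite S" "s \<in> S" "\<forall>i\<in>S. c i \<ge> 0" "B > 0" "monotone_submodular S F"
    and opt_pos: "opt S c B F > 0" and small: "F {s} \<le> opt S c B F / 2"
  shows "rate S c B F s \<le> (1 + payment_overhead (largeness S c B F)) * B / opt S c B F"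
proof -
  define m where "m = max (1/2) (1 - \<bar>largeness S c B F\<bar>)"
  have "F {s} \<le> \<bar>largeness S c B F\<bar> * opt S c B F"
    using singleton_le_largeness[OF assms(1,2) opt_pos] opt_pos
    by (smt (verit) abs_ge_self mult_right_mono)
  then have "m * opt S c B F \<le> opt S c B F - F {s}"
    using small by (auto simp: m_def max_def algebra_simps)
  also have "\<dots> \<le> opt (S - {s}) c B F"
    using assms by (intro opt_delete_ge) auto
  finally have opt_delete: "m * opt S c B F \<le> opt (S - {s}) c B F" .
  have "m * opt S c B F > 0"
    using opt_pos by (simp add: m_def)
  then have "B / opt (S - {s}) c B F \<le> B / (m * opt S c B F)"
    using opt_delete \<open>B > 0\<close> by (intro divide_left_mono) auto
  then show ?thesis
    by (simp add: rate_def payment_overhead_def m_def)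
qed

lemma chi_mono: "i \<le> j \<Longrightarrow> chi x i \<subseteq> chi x j"
  unfolding chi_def by auto

lemma chi_0 [simp]: "chi x 0 = {}"
  unfolding chi_def by auto

lemma sum_marginal: "(\<Sum>j=1..k. marginal F x j) = F (chi x k) - F {}"
  by (induction k) (auto simp: marginal_def)

lemma marginal_nonneg:
  assumes "monotone_submodular S F" "chi x j \<subseteq> S"
  shows "marginal F x j \<ge> 0"
  using assms chi_mono[of "j - 1" j x] by (auto simp: marginal_def monotone_submodular_def)

lemma greedy_seq_chi_subset:
  "greedy_seq n c F x \<Longrightarrow> j \<le> n \<Longrightarrow> chi x j \<subseteq> {1..n}"
  unfolding greedy_seq_def chi_def by auto

theorem lemma18:
  "\<exists>\<epsilon> :: real \<Rightarrow> real. (\<forall>\<theta>. \<epsilon> \<theta> \<ge> 0) \<and> (\<epsilon> \<longlongrightarrow> 0) (at_right 0) \<and>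
     (\<forall>(n::nat) (c::nat \<Rightarrow> real) (F::nat set \<Rightarrow> real) (B::real) (x::nat \<Rightarrow> nat) (k::nat).
        (\<forall>i\<in>{1..n}. c i \<ge> 0) \<and> B > 0 \<and> monotone_submodular {1..n} F \<and>
        opt {1..n} c B F > 0 \<and> greedy_seq n c F x \<and> oracle_k n c B F x k
        \<longrightarrow> oracle_payment n c B F x k \<le> (1 + \<epsilon> (largeness {1..n} c B F)) * B)"
proof (intro exI[of _ payment_overhead] conjI allI impI payment_overhead_nonneg
    payment_overhead_tendsto_0)
  fix n c F B x k
  assume "(\<forall>i\<in>{1..n}. c i \<ge> 0) \<and> B > 0 \<and> monotone_submodular {1..n} F \<and>
    opt {1..n} c B F > 0 \<and> greedy_seq n c F x \<and> oracle_k n c B F x k"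
  then have c: "\<forall>i\<in>{1..n}. c i \<ge> 0" and "B > 0" and F: "monotone_submodular {1..n} F"
    and opt_pos: "opt {1..n} c B F > 0" and greedy: "greedy_seq n c F x"
    and "k \<le> n" and half: "F (chi x k) \<le> opt {1..n} c B F / 2"
    by (auto simp: oracle_k_def)
  define R where "R = (1 + payment_overhead (largeness {1..n} c B F)) * B / opt {1..n} c B F"
  have winners: "chi x k \<subseteq> {1..n}" and mono: "\<And>A T. A \<subseteq> T \<Longrightarrow> T \<subseteq> {1..n} \<Longrightarrow> F A \<le> F T"
    using greedy_seq_chi_subset[OF greedy \<open>k \<le> n\<close>] F by (auto simp: monotone_submodular_def)
  have "rate {1..n} c B F (x j) \<le> R" if "j \<in> {1..k}" for j
  proof -
    have "x j \<in> chi x k" using that by (auto simp: chi_def)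
    then have "F {x j} \<le> opt {1..n} c B F / 2"
      using winners by (intro order_trans[OF mono half]) auto
    then show ?thesis unfolding R_def using \<open>x j \<in> chi x k\<close> winners c \<open>B > 0\<close> F opt_pos
      by (intro rate_le_overhead) auto
  qed
  moreover have "marginal F x j \<ge> 0" if "j \<in> {1..k}" for j
    using that winners chi_mono[of j k x] by (intro marginal_nonneg[OF F]) auto
  ultimately have "oracle_payment n c B F x k \<le> 2 * R * (\<Sum>j=1..k. marginal F x j)"
    unfolding oracle_payment_def sum_distrib_left
    by (intro sum_mono mult_right_mono mult_left_mono) auto
  also have "\<dots> \<le> 2 * R * (opt {1..n} c B F / 2)"
  proof (rule mult_left_mono)
    have "F {} \<ge> 0" using F by (simp add: monotone_submodular_def)
    then show "(\<Sum>j=1..k. marginal F x j) \<le> opt {1..n} c B F / 2"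
      using half sum_marginal[of F x k] by simp
    show "2 * R \<ge> 0"
      using opt_pos \<open>B > 0\<close> payment_overhead_nonneg[of "largeness {1..n} c B F"]
      by (simp add: R_def)
  qed
  finally show "oracle_payment n c B F x k \<le> (1 + payment_overhead (largeness {1..n} c B F)) * B"
    using opt_pos by (simp add: R_def)
qed

end
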